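(* Let $V$ be a commutative unital quantale whose underlying lattice is a frame and in which $k=\top$. Let $(X,a)$, $(Y,b)$ be $V$-groups, $\varphi\colon Y\to\mathrm{Aut}(X)$ a group action, and $c$ a $V$-category structure on $X\rtimes_\varphi Y$ such that $(X,a)\xrightarrow{\langle 1,0\rangle}(X\rtimes_\varphi Y,c)\underset{\langle 0,1\rangle}{\overset{\pi_2}{\rightleftarrows}}(Y,b)$ is a split extension in $\mathsf{VGrp}$. Then $a\otimes b\le c\le\mathrm{lex}$ (pointwise), where $(a\otimes b)((x,y),(x',y'))=a(x,x')\otimes b(y,y')$ and $\mathrm{lex}((x,y),(x',y'))$ equals $a(x,x')$ if $y=y'$ and $b(y,y')$ if $y\neq y'$.
   Context: A commutative unital quantale $V$ is a complete lattice with a commutative associative operation $\otimes$ with unit $k$ preserving arbitrary joins in each variable. A $V$-category $(X,a)$: $a\colon X\times X\to V$ with $k\le a(x,x)$ and $a(x,x')\otimes a(x',x'')\le a(x,x'')$; a $V$-functor is a map $f$ with $a(x,x')\le b(f(x),f(x'))$. A $V$-group $(X,a,+)$ is a $V$-category with a group structure (additive, not necessarily abelian) such that $a(x_1,x_2)\otimes a(x_1',x_2')\le a(x_1+x_1',x_2+x_2')$; $V$-homomorphisms are group homomorphisms that are $V$-functors; category $\mathsf{VGrp}$ (pointed since $k=\top$). The semidirect product $X\rtimes_\varphi Y$ is $X\times Y$ with $(x,y)+(x',y')=(x+\varphi_y(x'),y+y')$, $\varphi_y=\varphi(y)$; $\langle 1,0\rangle(x)=(x,0)$, $\langle 0,1\rangle(y)=(0,y)$,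 $\pi_2(x,y)=y$. A split extension in $\mathsf{VGrp}$ means: the middle object is a $V$-group, all three maps are $V$-homomorphisms, $\pi_2\circ\langle 0,1\rangle=1_Y$, and $\langle 1,0\rangle$ is a kernel of $\pi_2$ in $\mathsf{VGrp}$ (so $a(x,x')=c((x,0),(x',0))$). *)

theory Defs
  imports Main
begin

definition comm_quantale :: "('v::complete_lattice \<Rightarrow> 'v \<Rightarrow> 'v) \<Rightarrow> 'v \<Rightarrow> bool" where
  "comm_quantale t k \<longleftrightarrow>
     (\<forall>u v. t u v = t v u) \<and>
     (\<forall>u v w. t (t u v) w = t u (t v w)) \<and>
     (\<forall>u. t k u = u \<and> t u k = u) \<and>
     (\<forall>u S. t u (Sup S) = Sup (t u ` S)) \<and>
     (\<forall>u S. t (Sup S) u = Sup ((\<lambda>s. t s u) ` S))"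

definition is_frame :: "'v::complete_lattice itself \<Rightarrow> bool" where
  "is_frame _ \<longleftrightarrow> (\<forall>(u::'v) S. inf u (Sup S) = Sup (inf u ` S))"

definition V_category :: "('v::complete_lattice \<Rightarrow> 'v \<Rightarrow> 'v) \<Rightarrow> 'v \<Rightarrow> ('x \<Rightarrow> 'x \<Rightarrow> 'v) \<Rightarrow> bool" where
  "V_category t k a \<longleftrightarrow>
     (\<forall>x. k \<le> a x x) \<and> (\<forall>x x' x''. t (a x x') (a x' x'') \<le> a x x'')"

definition V_functor :: "('x \<Rightarrow> 'x \<Rightarrow> 'v::complete_lattice) \<Rightarrow> ('y \<Rightarrow> 'y \<Rightarrow> 'v) \<Rightarrow> ('x \<Rightarrow> 'y) \<Rightarrow> bool" where
  "V_functor a b f \<longleftrightarrow> (\<forall>x x'. a x x' \<le> b (f x) (f x'))"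

definition V_group_wrt :: "('v::complete_lattice \<Rightarrow> 'v \<Rightarrow> 'v) \<Rightarrow> 'v \<Rightarrow> ('x \<Rightarrow> 'x \<Rightarrow> 'x) \<Rightarrow> ('x \<Rightarrow> 'x \<Rightarrow> 'v) \<Rightarrow> bool" where
  "V_group_wrt t k add a \<longleftrightarrow> V_category t k a \<and>
     (\<forall>x1 x2 x1' x2'. t (a x1 x2) (a x1' x2') \<le> a (add x1 x1') (add x2 x2'))"

definition V_group :: "('v::complete_lattice \<Rightarrow> 'v \<Rightarrow> 'v) \<Rightarrow> 'v \<Rightarrow> ('x::group_add \<Rightarrow> 'x \<Rightarrow> 'v) \<Rightarrow> bool" where
  "V_group t k a \<longleftrightarrow> V_group_wrt t k (+) a"

definition group_action :: "('y::group_add \<Rightarrow> 'x::group_add \<Rightarrow> 'x) \<Rightarrow> bool" where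
  "group_action \<phi> \<longleftrightarrow>
     (\<forall>y. bij (\<phi> y) \<and> (\<forall>x x'. \<phi> y (x + x') = \<phi> y x + \<phi> y x')) \<and>
     (\<forall>y y'. \<phi> (y + y') = \<phi> y \<circ> \<phi> y')"

definition sd_add :: "('y::group_add \<Rightarrow> 'x::group_add \<Rightarrow> 'x) \<Rightarrow> 'x \<times> 'y \<Rightarrow> 'x \<times> 'y \<Rightarrow> 'x \<times> 'y" where
  "sd_add \<phi> p q = (fst p + \<phi> (snd p) (fst q), snd p + snd q)"

text \<open>Split extension in VGrp; the kernel condition is that the structure a is the
  restriction of c along <1,0> (the kernel of pi_2 in VGrp carries the restricted structure).\<close>
definition split_extension_VGrp ::
  "('v::complete_lattice \<Rightarrow> 'v \<Rightarrow> 'v) \<Rightarrow> 'v \<Rightarrow> ('x::group_add \<Rightarrow> 'x \<Rightarrow> 'v) \<Rightarrow> ('y::group_add \<Rightarrow> 'y \<Rightarrow> 'v)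
    \<Rightarrow> ('y \<Rightarrow> 'x \<Rightarrow> 'x) \<Rightarrow> ('x \<times> 'y \<Rightarrow> 'x \<times> 'y \<Rightarrow> 'v) \<Rightarrow> bool" where
  "split_extension_VGrp t k a b \<phi> c \<longleftrightarrow>
     V_group_wrt t k (sd_add \<phi>) c \<and>
     V_functor a c (\<lambda>x. (x, 0)) \<and>
     V_functor b c (\<lambda>y. (0, y)) \<and>
     V_functor c b snd \<and>
     (\<forall>x x'. a x x' = c (x, 0) (x', 0))"

end

theory Submission
  imports Defs
begin

text \<open>Since \<open>\<phi>\<^sub>y 0 = 0\<close>, every pair splits as \<open>(x, y) = (x, 0) + (0, y)\<close> in the semidirect
  product, so compatibility of \<open>c\<close> with addition together with the restrictions of \<open>c\<close> along
  \<open>\<langle>1,0\<rangle>\<close> and \<open>\<langle>0,1\<rangle>\<close> gives \<open>a \<otimes> b \<le> c\<close>. Conversely, translating two points of the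
  same fibre \<open>Y = y\<close> by \<open>(0, -y)\<close>, whose self-distance is at least \<open>k\<close>, moves them into the
  kernel, where \<open>c\<close> is \<open>a\<close>; points of different fibres are handled by the \<open>V\<close>-functor \<open>\<pi>\<^sub>2\<close>.\<close>

lemma comm_quantale_mono_right:
  assumes "comm_quantale t k" and "v \<le> w"
  shows "t u v \<le> t u w"
proof -
  have "t u w = t u (Sup {v, w})"
    using \<open>v \<le> w\<close> by (simp add: sup_absorb2)
  also have "\<dots> = Sup (t u ` {v, w})"
    using assms(1) unfolding comm_quantale_def by blast
  also have "\<dots> = sup (t u v) (t u w)"
    by simp
  finally show ?thesis
    by (metis sup.cobounded1)
qed

lemma group_action_zero:
  assumes "group_action \<phi>"
  shows "\<phi> y 0 = 0"
proof -
  have "\<phi> y (0 + 0) = \<phi> y 0 + \<phi> y 0"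
    using assms unfolding group_action_def by blast
  then show ?thesis
    by (metis add.right_neutral add_left_cancel)
qed

lemma sd_add_zero_fst:
  assumes "group_action \<phi>"
  shows "sd_add \<phi> (x, y) (0, y') = (x, y + y')"
  by (simp add: sd_add_def group_action_zero[OF assms])

lemma split_extension_tensor_le:
  assumes "comm_quantale t k" and "group_action \<phi>"
    and "split_extension_VGrp t k a b \<phi> c"
  shows "t (a x x') (b y y') \<le> c (x, y) (x', y')"
proof -
  have "t (a x x') (b y y') \<le> t (c (x, 0) (x', 0)) (c (0, y) (0, y'))"
    using assms(3) comm_quantale_mono_right[OF assms(1)]
    unfolding split_extension_VGrp_def V_functor_def by simp
  also have "\<dots> \<le> c (sd_add \<phi> (x, 0) (0, y)) (sd_add \<phi> (x', 0) (0, y'))"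
    using assms(3) unfolding split_extension_VGrp_def V_group_wrt_def by blast
  also have "\<dots> = c (x, y) (x', y')"
    by (simp add: sd_add_zero_fst[OF assms(2)])
  finally show ?thesis .
qed

lemma split_extension_fibre_le:
  assumes "comm_quantale t k" and "group_action \<phi>"
    and "split_extension_VGrp t k a b \<phi> c"
  shows "c (x, y) (x', y) \<le> a x x'"
proof -
  have c_group: "V_group_wrt t k (sd_add \<phi>) c"
    using assms(3) unfolding split_extension_VGrp_def by blast
  have "c (x, y) (x', y) = t (c (x, y) (x', y)) k"
    using assms(1) unfolding comm_quantale_def by simp
  also have "\<dots> \<le> t (c (x, y) (x', y)) (c (0, -y) (0, -y))"
    using c_group comm_quantale_mono_right[OF assms(1)]
    unfolding V_group_wrt_def V_category_def by blast
  also have "\<dots> \<le> c (sd_add \<phi> (x, y) (0, -y)) (sd_add \<phi> (x', y) (0, -y))"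
    using c_group unfolding V_group_wrt_def by blast
  also have "\<dots> = a x x'"
    using assms(3) by (simp add: sd_add_zero_fst[OF assms(2)] split_extension_VGrp_def)
  finally show ?thesis .
qed

theorem proposition7p6:
  fixes t :: "'v::complete_lattice \<Rightarrow> 'v \<Rightarrow> 'v" and k :: 'v
    and a :: "'x::group_add \<Rightarrow> 'x \<Rightarrow> 'v" and b :: "'y::group_add \<Rightarrow> 'y \<Rightarrow> 'v"
    and \<phi> :: "'y \<Rightarrow> 'x \<Rightarrow> 'x" and c :: "'x \<times> 'y \<Rightarrow> 'x \<times> 'y \<Rightarrow> 'v"
  assumes "comm_quantale t k"
    and "is_frame TYPE('v)"
    and "k = top"
    and "V_group t k a"
    and "V_group t k b"
    and "group_action \<phi>"
    and "split_extension_VGrp t k a b \<phi> c"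
  shows "\<forall>x y x' y'. t (a x x') (b y y') \<le> c (x, y) (x', y') \<and>
           c (x, y) (x', y') \<le> (if y = y' then a x x' else b y y')"
proof (intro allI conjI)
  fix x y x' y'
  show "t (a x x') (b y y') \<le> c (x, y) (x', y')"
    using split_extension_tensor_le[OF assms(1,6,7)] .
  have "c (x, y) (x', y') \<le> b y y'"
    using assms(7) unfolding split_extension_VGrp_def V_functor_def by (metis snd_conv)
  then show "c (x, y) (x', y') \<le> (if y = y' then a x x' else b y y')"
    using split_extension_fibre_le[OF assms(1,6,7)] by simp
qed

end
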